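(* Let $k\ge4$, $n\ge 2k$, and let $\mathcal F,\mathcal G\subset\binom{[n]}{k}$ be cross-intersecting. Suppose that for some $\{x,y\}\in\binom{[n]}{2}$, $$|\mathcal F(x,y)|\ge\binom{n-3}{k-3}+\binom{n-4}{k-3}+\binom{n-6}{k-4}.$$ Then $|\mathcal G(\bar x,\bar y)|\le\binom{n-5}{k-3}+\binom{n-6}{k-3}$.
   Context: Cross-intersecting: $F\cap G\ne\emptyset$ for all $F\in\mathcal F,G\in\mathcal G$. $\mathcal F(x,y)=\{F\setminus\{x,y\}:F\in\mathcal F,\ \{x,y\}\subset F\}$ and $\mathcal G(\bar x,\bar y)=\{G\in\mathcal G: G\cap\{x,y\}=\emptyset\}$. *)

theory Defs
  imports Main
begin

definition cross_intersecting :: "'a set set \<Rightarrow> 'a set set \<Rightarrow> bool" where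
  "cross_intersecting F G \<longleftrightarrow> (\<forall>A\<in>F. \<forall>B\<in>G. A \<inter> B \<noteq> {})"

definition link2 :: "'a set set \<Rightarrow> 'a \<Rightarrow> 'a \<Rightarrow> 'a set set" where
  "link2 F x y = {A - {x, y} | A. A \<in> F \<and> {x, y} \<subseteq> A}"

definition avoid2 :: "'a set set \<Rightarrow> 'a \<Rightarrow> 'a \<Rightarrow> 'a set set" where
  "avoid2 G x y = {B \<in> G. B \<inter> {x, y} = {}}"

end

theory Submission
  imports Defs
begin

text \<open>With \<open>X = [n] - {x, y}\<close>, \<open>link2 F x y\<close> and \<open>avoid2 G x y\<close> are cross-intersecting
families of \<open>(k-2)\<close>- and \<open>k\<close>-subsets of \<open>X\<close>. For cross-intersecting families \<open>\<F>\<close> of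
\<open>a\<close>-sets and \<open>\<G>\<close> of \<open>b\<close>-sets of an \<open>m\<close>-set with \<open>a + b \<le> m\<close>, \<open>b \<ge> 2\<close>, one shows by
induction on \<open>m\<close> that \<open>|\<G>| > \<beta>(m,b)\<close> implies \<open>|\<F>| + \<gamma>(m,a,b) \<le> \<alpha>(m,a)\<close>.
In the step both families are shifted until they are stable at a point \<open>t\<close>, which keeps
their sizes and cross-intersection; then the links and deletions at \<open>t\<close> are again
cross-intersecting in \<open>X - {t}\<close>, and the bounds add up by the Pascal recurrences of \<open>\<alpha>\<close>
and \<open>\<beta>\<close>. The base cases \<open>a \<le> 1\<close>, \<open>b = 2\<close> and \<open>a + b = m\<close> are direct counts. In the
situation of the theorem \<open>\<gamma> > 0\<close>, so the assumed size of the link forces \<open>|\<G>| \<le> \<beta>\<close>.\<close>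

definition k_subsets :: "'a set \<Rightarrow> nat \<Rightarrow> 'a set set" where
  "k_subsets X k = {A. A \<subseteq> X \<and> card A = k}"

lemma finite_k_subsets: "finite X \<Longrightarrow> finite (k_subsets X k)"
  unfolding k_subsets_def by simp

lemma card_k_subsets: "finite X \<Longrightarrow> card (k_subsets X k) = card X choose k"
  unfolding k_subsets_def by (rule n_subsets)

lemma cross_intersecting_commute: "cross_intersecting F G \<longleftrightarrow> cross_intersecting G F"
  unfolding cross_intersecting_def by blast

section \<open>The bounding functions\<close>

text \<open>These are \<open>\<alpha>\<close>, \<open>\<beta>\<close>, \<open>\<gamma>\<close>; for \<open>m = n - 2\<close>, \<open>a = k - 2\<close>, \<open>b = k\<close> the first two are
the bounds of the theorem.\<close>

definition f_bound :: "nat \<Rightarrow> nat \<Rightarrow> nat" where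
  "f_bound m a = (if a = 0 then 0 else if a = 1 then 2 else
     (m - 1 choose (a - 1)) + (m - 2 choose (a - 1)) + (m - 4 choose (a - 2)))"

definition g_threshold :: "nat \<Rightarrow> nat \<Rightarrow> nat" where
  "g_threshold m b = (if b < 3 then 0 else (m - 3 choose (b - 3)) + (m - 4 choose (b - 3)))"

definition f_slack :: "nat \<Rightarrow> nat \<Rightarrow> nat \<Rightarrow> nat" where
  "f_slack m a b = (if a < 2 then 0 else m - b - 2 choose (a - 2))"

lemma g_threshold_pascal:
  assumes "b \<ge> 3" "m \<ge> 6"
  shows "g_threshold m b = g_threshold (m - 1) b + g_threshold (m - 1) (b - 1)"
proof (cases "b = 3")
  case True
  then show ?thesis using assms by (simp add: g_threshold_def)
next
  case False
  then obtain c p where "b = 4 + c" "m = 6 + p"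
    using assms le_Suc_ex[of 4 b] le_Suc_ex[of 6 m] by force
  then show ?thesis by (simp add: g_threshold_def numeral_eq_Suc)
qed

lemma f_bound_pascal:
  assumes "a \<ge> 2" "m \<ge> 6"
  shows "f_bound m a = f_bound (m - 1) a + f_bound (m - 1) (a - 1)"
proof -
  obtain p where p: "m = 6 + p" using assms(2) le_Suc_ex by blast
  show ?thesis
  proof (cases "a = 2")
    case True
    then show ?thesis using p by (simp add: f_bound_def numeral_eq_Suc)
  next
    case False
    then obtain c where "a = 3 + c" using assms(1) le_Suc_ex[of 3 a] by force
    then show ?thesis using p by (simp add: f_bound_def numeral_eq_Suc)
  qed
qed

lemma f_slack_pascal:
  assumes "a \<ge> 2" "m \<ge> a + b + 1"
  shows "f_slack m a b \<le> f_slack (m - 1) a b + f_slack (m - 1) (a - 1) b"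
proof (cases "a = 2")
  case True
  then show ?thesis by (simp add: f_slack_def)
next
  case False
  then obtain c where c: "a = 3 + c" using assms(1) le_Suc_ex[of 3 a] by force
  obtain q where "m - b - 2 = Suc q" "m - 1 - b - 2 = q" using assms c
    by (intro that[of "m - b - 3"]) auto
  then show ?thesis using c by (simp add: f_slack_def numeral_eq_Suc)
qed

lemma f_slack_pred: "b \<ge> 1 \<Longrightarrow> f_slack (m - 1) a (b - 1) = f_slack m a b"
  by (simp add: f_slack_def)

lemma choose_le_f_bound_add_g_threshold:
  assumes "a \<ge> 2" "b \<ge> 3"
  shows "(a + b choose a) \<le> f_bound (a + b) a + g_threshold (a + b) b"
proof -
  obtain c d where cd: "a = c + 2" "b = d + 3" using assms le_Suc_ex[of 2 a] le_Suc_ex[of 3 b] by force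
  have "(c + d + 2 choose d) = (c + d + 2 choose (c + 2))"
    using binomial_symmetric[of d "c + d + 2"] by simp
  moreover have "(c + d + 1 choose d) = (c + d + 1 choose (c + 1))"
    using binomial_symmetric[of d "c + d + 1"] by simp
  ultimately show ?thesis unfolding f_bound_def g_threshold_def using cd
    by (simp add: numeral_eq_Suc add.commute[of _ d] add.left_commute[of _ d])
qed

lemma choose_diff_le_f_bound:
  assumes "a \<ge> 2" "m \<ge> a + 2"
  shows "(m choose a) - (m - 2 choose a) + f_slack m a 2 \<le> f_bound m a"
proof -
  obtain c p where "a = c + 2" "m = p + c + 4"
    using assms by (intro that[of "a - 2" "m - a - 2"]) auto
  then show ?thesis unfolding f_bound_def f_slack_def by (simp add: numeral_eq_Suc)
qed

section \<open>Shifting\<close>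

definition shift_set :: "'a \<Rightarrow> 'a \<Rightarrow> 'a set \<Rightarrow> 'a set" where
  "shift_set j t A = (if t \<in> A \<and> j \<notin> A then insert j (A - {t}) else A)"

definition shift_family :: "'a \<Rightarrow> 'a \<Rightarrow> 'a set set \<Rightarrow> 'a set set" where
  "shift_family j t F =
     shift_set j t ` {A \<in> F. shift_set j t A \<notin> F} \<union> {A \<in> F. shift_set j t A \<in> F}"

definition shift_stable :: "'a set \<Rightarrow> 'a \<Rightarrow> 'a set set \<Rightarrow> bool" where
  "shift_stable X t F \<longleftrightarrow>
     (\<forall>j\<in>X - {t}. \<forall>A\<in>F. t \<in> A \<and> j \<notin> A \<longrightarrow> insert j (A - {t}) \<in> F)"

lemma shift_set_moved:
  assumes "A \<in> F" "shift_set j t A \<notin> F"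
  shows "t \<in> A" "j \<notin> A" "shift_set j t A = insert j (A - {t})"
  using assms by (auto simp: shift_set_def split: if_splits)

lemma inj_on_shift_set:
  assumes "j \<noteq> t"
  shows "inj_on (shift_set j t) {A \<in> F. shift_set j t A \<notin> F}"
proof (rule inj_onI)
  fix A B
  assume "A \<in> {A \<in> F. shift_set j t A \<notin> F}" "B \<in> {A \<in> F. shift_set j t A \<notin> F}"
    and eq: "shift_set j t A = shift_set j t B"
  then have "t \<in> A" "j \<notin> A" "t \<in> B" "j \<notin> B"
    "insert j (A - {t}) = insert j (B - {t})"
    using shift_set_moved[of A F j t] shift_set_moved[of B F j t] by auto
  then have "A = insert t (insert j (A - {t}) - {j})" "B = insert t (insert j (B - {t}) - {j})"
    using assms by blast+
  with \<open>insert j (A - {t}) = insert j (B - {t})\<close> show "A = B" by simp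
qed

lemma card_shift_family:
  assumes "finite F" "j \<noteq> t"
  shows "card (shift_family j t F) = card F"
proof -
  let ?M = "{A \<in> F. shift_set j t A \<notin> F}" and ?K = "{A \<in> F. shift_set j t A \<in> F}"
  have "card (shift_family j t F) = card (shift_set j t ` ?M) + card ?K"
    unfolding shift_family_def using assms(1) by (intro card_Un_disjoint) auto
  also have "\<dots> = card ?M + card ?K"
    using card_image[OF inj_on_shift_set[OF assms(2)]] by simp
  also have "\<dots> = card (?M \<union> ?K)"
    using assms(1) by (intro card_Un_disjoint[symmetric]) auto
  also have "?M \<union> ?K = F" by blast
  finally show ?thesis .
qed

lemma shift_set_k_subsets:
  assumes "finite X" "j \<in> X" "A \<in> k_subsets X k"
  shows "shift_set j t A \<in> k_subsets X k"
proof (cases "t \<in> A \<and> j \<notin> A")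
  case True
  moreover have "finite A" using assms finite_subset unfolding k_subsets_def by auto
  moreover from calculation have "card A > 0" using card_gt_0_iff by blast
  ultimately have "card (insert j (A - {t})) = card A"
    by (simp add: card_Diff_singleton card_gt_0_iff)
  then show ?thesis using True assms unfolding k_subsets_def shift_set_def by auto
qed (use assms in \<open>auto simp: shift_set_def\<close>)

lemma shift_family_k_subsets:
  assumes "finite X" "j \<in> X" "F \<subseteq> k_subsets X k"
  shows "shift_family j t F \<subseteq> k_subsets X k"
  using assms shift_set_k_subsets[OF assms(1,2)] unfolding shift_family_def by blast

lemma shift_familyE:
  assumes "C \<in> shift_family j t F"
  obtains (moved) A where "A \<in> F" "t \<in> A" "j \<notin> A" "insert j (A - {t}) \<notin> F"
      "C = insert j (A - {t})"
    | (kept) "C \<in> F" "shift_set j t C \<in> F"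
proof -
  from assms consider A where "A \<in> F" "shift_set j t A \<notin> F" "C = shift_set j t A"
    | "C \<in> F" "shift_set j t C \<in> F"
    unfolding shift_family_def by blast
  then show thesis
  proof cases
    case (1 A)
    then show thesis using moved shift_set_moved[OF 1(1,2)] by simp
  qed (rule kept)
qed

text \<open>If \<open>A\<close> moves to \<open>A' = A - {t} + {j}\<close> and some \<open>B\<close> of the other family stays although
it misses \<open>A'\<close>, then \<open>B\<close> meets \<open>A\<close> in \<open>t\<close> only, so its own shift would miss \<open>A\<close>.\<close>

lemma shift_set_meets_unmoved:
  assumes "cross_intersecting F G" "A \<in> F" "t \<in> A" "j \<notin> A"
    "B \<in> G" "shift_set j t B \<in> G"
  shows "insert j (A - {t}) \<inter> B \<noteq> {}"
proof
  assume disj: "insert j (A - {t}) \<inter> B = {}"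
  have "A \<inter> B \<noteq> {}" "A \<inter> shift_set j t B \<noteq> {}"
    using assms unfolding cross_intersecting_def by blast+
  moreover from this disj have "t \<in> B" "j \<notin> B" by auto
  ultimately show False using disj assms(3,4) by (auto simp: shift_set_def)
qed

lemma cross_intersecting_shift_family:
  assumes "cross_intersecting F G"
  shows "cross_intersecting (shift_family j t F) (shift_family j t G)"
  unfolding cross_intersecting_def
proof (intro ballI)
  fix A' B'
  assume A': "A' \<in> shift_family j t F" and B': "B' \<in> shift_family j t G"
  have GF: "cross_intersecting G F" using assms cross_intersecting_commute by blast
  from A' show "A' \<inter> B' \<noteq> {}"
  proof (cases rule: shift_familyE)
    case (moved A)
    from B' show ?thesis
    proof (cases rule: shift_familyE)
      case moved
      then show ?thesis using \<open>A' = insert j (A - {t})\<close> by auto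
    next
      case kept
      then show ?thesis using shift_set_meets_unmoved[OF assms] moved by blast
    qed
  next
    case kept
    from B' show ?thesis
    proof (cases rule: shift_familyE)
      case (moved B)
      then show ?thesis using shift_set_meets_unmoved[OF GF] kept by blast
    next
      case kept
      then show ?thesis using assms \<open>A' \<in> F\<close> unfolding cross_intersecting_def by blast
    qed
  qed
qed

lemma shift_family_containing_subset:
  "{C \<in> shift_family j t F. t \<in> C} \<subseteq> {A \<in> F. t \<in> A}"
proof clarify
  fix C assume "C \<in> shift_family j t F" "t \<in> C"
  then show "C \<in> F" by (cases rule: shift_familyE) simp_all
qed

lemma moved_not_mem_shift_family:
  assumes "t \<in> A" "j \<notin> A" "insert j (A - {t}) \<notin> F"
  shows "A \<notin> shift_family j t F"
proof
  assume "A \<in> shift_family j t F"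
  then show False
  proof (cases rule: shift_familyE)
    case (moved B)
    then show False using assms(2) by simp
  next
    case kept
    then show False using assms by (simp add: shift_set_def)
  qed
qed

lemma card_shift_family_containing_less:
  assumes "finite F" "A \<in> F" "t \<in> A" "j \<notin> A" "insert j (A - {t}) \<notin> F"
  shows "card {C \<in> shift_family j t F. t \<in> C} < card {A \<in> F. t \<in> A}"
proof (rule psubset_card_mono)
  show "finite {A \<in> F. t \<in> A}" using assms(1) by simp
  have "A \<in> {A \<in> F. t \<in> A} - {C \<in> shift_family j t F. t \<in> C}"
    using moved_not_mem_shift_family[OF assms(3-5)] assms(2,3) by simp
  then show "{C \<in> shift_family j t F. t \<in> C} \<subset> {A \<in> F. t \<in> A}"
    using shift_family_containing_subset[of j t F] by blast
qed

text \<open>Each non-trivial shift strictly decreases the number of members containing \<open>t\<close>.\<close>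

lemma exists_shift_stable:
  assumes "finite X" "t \<in> X"
    and "F \<subseteq> k_subsets X a" "G \<subseteq> k_subsets X b" "cross_intersecting F G"
  shows "\<exists>F' G'. F' \<subseteq> k_subsets X a \<and> G' \<subseteq> k_subsets X b \<and> card F' = card F \<and>
    card G' = card G \<and> cross_intersecting F' G' \<and> shift_stable X t F' \<and> shift_stable X t G'"
  using assms(3-5)
proof (induction "card {A \<in> F. t \<in> A} + card {B \<in> G. t \<in> B}" arbitrary: F G rule: less_induct)
  case less
  show ?case
  proof (cases "shift_stable X t F \<and> shift_stable X t G")
    case True
    then show ?thesis using less.prems by blast
  next
    case False
    then obtain j where j: "j \<in> X" "j \<noteq> t" and
      unstable: "(\<exists>A\<in>F. t \<in> A \<and> j \<notin> A \<and> insert j (A - {t}) \<notin> F) \<or>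
          (\<exists>A\<in>G. t \<in> A \<and> j \<notin> A \<and> insert j (A - {t}) \<notin> G)"
      unfolding shift_stable_def by blast
    have "finite F" "finite G"
      using finite_subset[OF less.prems(1)] finite_subset[OF less.prems(2)]
        finite_k_subsets[OF assms(1)] by auto
    let ?F = "shift_family j t F" and ?G = "shift_family j t G"
    have le: "card {A \<in> ?F. t \<in> A} \<le> card {A \<in> F. t \<in> A}"
      "card {A \<in> ?G. t \<in> A} \<le> card {A \<in> G. t \<in> A}"
      using \<open>finite F\<close> \<open>finite G\<close>
      by (simp_all add: card_mono[OF _ shift_family_containing_subset])
    have "card {A \<in> ?F. t \<in> A} + card {B \<in> ?G. t \<in> B} < card {A \<in> F. t \<in> A} + card {B \<in> G. t \<in> B}"
      using unstable
    proof (elim disjE bexE conjE)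
      fix A assume "A \<in> F" "t \<in> A" "j \<notin> A" "insert j (A - {t}) \<notin> F"
      from card_shift_family_containing_less[OF \<open>finite F\<close> this] show ?thesis using le by linarith
    next
      fix B assume "B \<in> G" "t \<in> B" "j \<notin> B" "insert j (B - {t}) \<notin> G"
      from card_shift_family_containing_less[OF \<open>finite G\<close> this] show ?thesis using le by linarith
    qed
    moreover have "?F \<subseteq> k_subsets X a" "?G \<subseteq> k_subsets X b" "cross_intersecting ?F ?G"
      using shift_family_k_subsets[OF assms(1) j(1)] cross_intersecting_shift_family less.prems
      by auto
    ultimately have "\<exists>F' G'. F' \<subseteq> k_subsets X a \<and> G' \<subseteq> k_subsets X b \<and>
        card F' = card ?F \<and> card G' = card ?G \<and> cross_intersecting F' G' \<and>
        shift_stable X t F' \<and> shift_stable X t G'"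
      by (rule less.hyps)
    then show ?thesis
      unfolding card_shift_family[OF \<open>finite F\<close> j(2)] card_shift_family[OF \<open>finite G\<close> j(2)] .
  qed
qed

section \<open>Links and deletions of stable families\<close>

definition deletion :: "'a \<Rightarrow> 'a set set \<Rightarrow> 'a set set" where
  "deletion t F = {A \<in> F. t \<notin> A}"

definition link :: "'a \<Rightarrow> 'a set set \<Rightarrow> 'a set set" where
  "link t F = (\<lambda>A. A - {t}) ` {A \<in> F. t \<in> A}"

lemma deletion_k_subsets: "F \<subseteq> k_subsets X a \<Longrightarrow> deletion t F \<subseteq> k_subsets (X - {t}) a"
  unfolding deletion_def k_subsets_def by auto

lemma link_k_subsets:
  assumes "finite X" "F \<subseteq> k_subsets X a"
  shows "link t F \<subseteq> k_subsets (X - {t}) (a - 1)"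
  using assms finite_subset unfolding link_def k_subsets_def by fastforce

lemma card_deletion_add_card_link:
  assumes "finite F"
  shows "card (deletion t F) + card (link t F) = card F"
proof -
  have "inj_on (\<lambda>A. A - {t}) {A \<in> F. t \<in> A}"
    by (rule inj_onI) blast
  then have "card (link t F) = card {A \<in> F. t \<in> A}"
    unfolding link_def by (rule card_image)
  moreover have "card {A \<in> F. t \<notin> A} + card {A \<in> F. t \<in> A} = card F"
    using assms by (subst card_Un_disjoint[symmetric]) (auto intro: arg_cong[where f = card])
  ultimately show ?thesis unfolding deletion_def by simp
qed

lemma cross_intersecting_deletion:
  "cross_intersecting F G \<Longrightarrow> cross_intersecting (deletion t F) (deletion t G)"
  unfolding cross_intersecting_def deletion_def by blast

text \<open>A point \<open>j\<close> outside \<open>A \<union> B\<close> can take the place of \<open>t\<close> in \<open>A\<close>.\<close>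

lemma shift_stable_meets:
  assumes "finite X" "shift_stable X t F" "cross_intersecting F G"
    and "A \<in> F" "t \<in> A" "B \<in> G" "A \<union> B \<subseteq> X" "card (A \<union> B) < card X"
  shows "(A - {t}) \<inter> B \<noteq> {}"
proof -
  have "A \<union> B \<noteq> X" using assms(8) by auto
  then obtain j where j: "j \<in> X" "j \<notin> A \<union> B" using assms(7) by blast
  then have "insert j (A - {t}) \<in> F"
    using assms(2,4,5) unfolding shift_stable_def by blast
  then have "insert j (A - {t}) \<inter> B \<noteq> {}"
    using assms(3,6) unfolding cross_intersecting_def by blast
  then show ?thesis using j by blast
qed

lemma cross_intersecting_link_deletion:
  assumes "finite X" "shift_stable X t F" "cross_intersecting F G"
    and "F \<subseteq> k_subsets X a" "G \<subseteq> k_subsets X b" "a + b < card X"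
  shows "cross_intersecting (link t F) (deletion t G)"
  unfolding cross_intersecting_def link_def deletion_def
proof clarify
  fix A B assume "A \<in> F" "t \<in> A" "B \<in> G" "(A - {t}) \<inter> B = {}"
  moreover have "card (A \<union> B) < card X"
    using card_Un_le[of A B] assms(4-6) \<open>A \<in> F\<close> \<open>B \<in> G\<close> unfolding k_subsets_def by fastforce
  ultimately show False
    using shift_stable_meets[OF assms(1-3)] assms(4,5) unfolding k_subsets_def by blast
qed

lemma cross_intersecting_link_link:
  assumes "finite X" "shift_stable X t F" "cross_intersecting F G"
    and "F \<subseteq> k_subsets X a" "G \<subseteq> k_subsets X b" "a + b \<le> card X"
  shows "cross_intersecting (link t F) (link t G)"
  unfolding cross_intersecting_def link_def
proof clarify
  fix A B assume AB: "A \<in> F" "t \<in> A" "B \<in> G" "t \<in> B" "(A - {t}) \<inter> (B - {t}) = {}"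
  have "A \<subseteq> X" "B \<subseteq> X" "card A = a" "card B = b"
    using assms(4,5) AB unfolding k_subsets_def by auto
  moreover from this have "finite A" "finite B" using assms(1) finite_subset by auto
  moreover from this have "card (A \<inter> B) > 0" using AB(2,4) card_gt_0_iff by blast
  ultimately have "card (A \<union> B) < card X"
    using card_Un_Int[of A B] assms(6) by linarith
  then show False
    using shift_stable_meets[OF assms(1-3) AB(1-3)] AB(5) \<open>A \<subseteq> X\<close> \<open>B \<subseteq> X\<close> by blast
qed

section \<open>Base cases\<close>

lemma card_k_subsets_containing_le:
  assumes "finite X" "P \<subseteq> X"
  shows "card {B \<in> k_subsets X b. P \<subseteq> B} \<le> card X - card P choose (b - card P)"
proof -
  have "finite P" using assms finite_subset by blast
  have "inj_on (\<lambda>B. B - P) {B \<in> k_subsets X b. P \<subseteq> B}"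
  proof (rule inj_onI)
    fix B B' assume "B \<in> {B \<in> k_subsets X b. P \<subseteq> B}" "B' \<in> {B \<in> k_subsets X b. P \<subseteq> B}"
      and "B - P = B' - P"
    then show "B = B'" using Diff_partition[of P B] Diff_partition[of P B'] by simp
  qed
  moreover have "(\<lambda>B. B - P) ` {B \<in> k_subsets X b. P \<subseteq> B} \<subseteq> k_subsets (X - P) (b - card P)"
  proof (rule image_subsetI)
    fix B assume B: "B \<in> {B \<in> k_subsets X b. P \<subseteq> B}"
    then have "B \<subseteq> X" "card B = b" unfolding k_subsets_def by auto
    moreover from this have "finite B" using assms(1) finite_subset by blast
    ultimately show "B - P \<in> k_subsets (X - P) (b - card P)"
      using B \<open>finite P\<close> unfolding k_subsets_def by (auto simp: card_Diff_subset)
  qed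
  ultimately have "card {B \<in> k_subsets X b. P \<subseteq> B} \<le> card (k_subsets (X - P) (b - card P))"
    using assms(1) by (intro card_inj_on_le) (simp_all add: finite_k_subsets)
  also have "\<dots> = card X - card P choose (b - card P)"
    using assms \<open>finite P\<close> by (simp add: card_k_subsets card_Diff_subset)
  finally show ?thesis .
qed

lemma cross_intersecting_k_subsets_zero:
  assumes "finite X" "F \<subseteq> k_subsets X 0" "cross_intersecting F G" "G \<noteq> {}"
  shows "F = {}"
proof -
  have "A = {}" if "A \<in> F" for A
    using that assms(1,2) finite_subset[of A X] unfolding k_subsets_def by auto
  moreover have "{} \<notin> F"
    using assms(3,4) unfolding cross_intersecting_def by blast
  ultimately show ?thesis by blast
qed

lemma k_subsets_one_eq_singletons:
  "F \<subseteq> k_subsets X 1 \<Longrightarrow> (\<lambda>p. {p}) ` \<Union>F = F"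
  unfolding k_subsets_def by (fastforce simp: card_1_singleton_iff)

text \<open>Three singletons in \<open>\<F>\<close> pin down three points of every member of \<open>\<G>\<close>.\<close>

lemma cross_intersecting_singletons_card_le:
  assumes "finite X" "card X = m" "F \<subseteq> k_subsets X 1" "G \<subseteq> k_subsets X b"
    and "cross_intersecting F G" "g_threshold m b < card G"
  shows "card F \<le> 2"
proof (rule ccontr)
  assume "\<not> card F \<le> 2"
  have F: "(\<lambda>p. {p}) ` \<Union>F = F" using k_subsets_one_eq_singletons[OF assms(3)] .
  have "card (\<Union>F) = card F"
    using card_image[of "\<lambda>p. {p}" "\<Union>F"] F by (simp add: inj_on_def)
  then obtain P where P: "P \<subseteq> \<Union>F" "card P = 3"
    using \<open>\<not> card F \<le> 2\<close> obtain_subset_with_card_n[of 3 "\<Union>F"] by auto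
  have "P \<subseteq> X" using P(1) assms(3) unfolding k_subsets_def by blast
  have G: "G \<subseteq> {B \<in> k_subsets X b. P \<subseteq> B}"
  proof
    fix B assume "B \<in> G"
    have "p \<in> B" if "p \<in> P" for p
    proof -
      have "{p} \<in> (\<lambda>p. {p}) ` \<Union>F" using that P(1) by blast
      then have "{p} \<in> F" by (simp only: F)
      then show ?thesis using \<open>B \<in> G\<close> assms(5) unfolding cross_intersecting_def by blast
    qed
    then show "B \<in> {B \<in> k_subsets X b. P \<subseteq> B}" using \<open>B \<in> G\<close> assms(4) by auto
  qed
  obtain B where "B \<in> G" using assms(6) by fastforce
  with G have "B \<subseteq> X" "card B = b" "P \<subseteq> B" unfolding k_subsets_def by auto
  then have "3 \<le> b" using P(2) card_mono[of B P] finite_subset[OF _ assms(1)] by simp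
  have "card G \<le> card {B \<in> k_subsets X b. P \<subseteq> B}"
    using G assms(1) by (intro card_mono) (simp_all add: finite_k_subsets)
  also have "\<dots> \<le> m - 3 choose (b - 3)"
    using card_k_subsets_containing_le[OF assms(1) \<open>P \<subseteq> X\<close>] P(2) assms(2) by simp
  also have "\<dots> \<le> g_threshold m b"
    using \<open>3 \<le> b\<close> by (simp add: g_threshold_def)
  finally show False using assms(6) by simp
qed

lemma cross_intersecting_pair_bound:
  assumes "finite X" "card X = m" "F \<subseteq> k_subsets X a" "G \<subseteq> k_subsets X 2"
    and "cross_intersecting F G" "G \<noteq> {}" "a \<ge> 2" "m \<ge> a + 2"
  shows "card F + f_slack m a 2 \<le> f_bound m a"
proof -
  obtain B where B: "B \<in> G" using assms(6) by blast
  then have "B \<subseteq> X" "card B = 2" using assms(4) unfolding k_subsets_def by auto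
  have sub: "k_subsets (X - B) a \<subseteq> k_subsets X a" unfolding k_subsets_def by auto
  have "F \<subseteq> k_subsets X a - k_subsets (X - B) a"
  proof
    fix A assume "A \<in> F"
    then have "A \<inter> B \<noteq> {}" using assms(5) B unfolding cross_intersecting_def by blast
    with \<open>A \<in> F\<close> assms(3) show "A \<in> k_subsets X a - k_subsets (X - B) a"
      unfolding k_subsets_def by auto
  qed
  then have "card F \<le> card (k_subsets X a - k_subsets (X - B) a)"
    using assms(1) by (intro card_mono) (simp_all add: finite_k_subsets)
  also have "\<dots> = card (k_subsets X a) - card (k_subsets (X - B) a)"
    using assms(1) sub by (simp add: card_Diff_subset finite_k_subsets)
  also have "\<dots> = (m choose a) - (m - 2 choose a)"
    using assms(1,2) \<open>B \<subseteq> X\<close> \<open>card B = 2\<close> finite_subset[OF \<open>B \<subseteq> X\<close> assms(1)]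
    by (simp add: card_k_subsets card_Diff_subset)
  finally show ?thesis using choose_diff_le_f_bound[OF assms(7,8)] by linarith
qed

text \<open>For \<open>a + b = m\<close>, complementation maps \<open>\<F>\<close> into the \<open>b\<close>-sets outside \<open>\<G>\<close>.\<close>

lemma cross_intersecting_complementary_bound:
  assumes "finite X" "card X = a + b" "F \<subseteq> k_subsets X a" "G \<subseteq> k_subsets X b"
    and "cross_intersecting F G" "g_threshold (a + b) b < card G" "a \<ge> 2" "b \<ge> 3"
  shows "card F + f_slack (a + b) a b \<le> f_bound (a + b) a"
proof -
  have "inj_on (\<lambda>A. X - A) F"
    using assms(3) unfolding k_subsets_def by (intro inj_onI) blast
  moreover have "(\<lambda>A. X - A) ` F \<subseteq> k_subsets X b - G"
  proof (rule image_subsetI)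
    fix A assume "A \<in> F"
    then have "A \<subseteq> X" "card A = a" using assms(3) unfolding k_subsets_def by auto
    then have "card (X - A) = b"
      using assms(1,2) finite_subset[of A X] by (simp add: card_Diff_subset)
    moreover have "X - A \<notin> G" using \<open>A \<in> F\<close> assms(5) unfolding cross_intersecting_def by blast
    ultimately show "X - A \<in> k_subsets X b - G" unfolding k_subsets_def by auto
  qed
  ultimately have "card F \<le> card (k_subsets X b - G)"
    using assms(1) by (intro card_inj_on_le) (simp_all add: finite_k_subsets)
  also have "\<dots> = (a + b choose a) - card G"
    using assms(1,2,4) binomial_symmetric[of a "a + b"]
    by (simp add: card_Diff_subset finite_subset finite_k_subsets card_k_subsets)
  finally have "card F + card G \<le> (a + b choose a)"
    using card_mono[OF finite_k_subsets[OF assms(1)] assms(4)] card_k_subsets[OF assms(1), of b]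
      assms(2) binomial_symmetric[of a "a + b"] by simp
  moreover have "f_slack (a + b) a b = 1" using assms(7) by (simp add: f_slack_def)
  ultimately show ?thesis
    using choose_le_f_bound_add_g_threshold[OF assms(7,8)] assms(6) by linarith
qed

section \<open>The general bound\<close>

lemma cross_intersecting_bound_step:
  fixes X :: "'a set"
  assumes IH: "\<And>(X :: 'a set) F G a b. finite X \<Longrightarrow> card X = m - 1 \<Longrightarrow>
      F \<subseteq> k_subsets X a \<Longrightarrow> G \<subseteq> k_subsets X b \<Longrightarrow> cross_intersecting F G \<Longrightarrow>
      a + b \<le> m - 1 \<Longrightarrow> 2 \<le> b \<Longrightarrow> g_threshold (m - 1) b < card G \<Longrightarrow>
      card F + f_slack (m - 1) a b \<le> f_bound (m - 1) a"
    and "finite X" "card X = m" "F \<subseteq> k_subsets X a" "G \<subseteq> k_subsets X b"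
    and "cross_intersecting F G" "a \<ge> 2" "b \<ge> 3" "a + b < m" "g_threshold m b < card G"
  shows "card F + f_slack m a b \<le> f_bound m a"
proof -
  have "X \<noteq> {}" using assms(3,9) by auto
  then obtain t where "t \<in> X" by blast
  then obtain F' G' where F': "F' \<subseteq> k_subsets X a" "card F' = card F" "shift_stable X t F'"
    and G': "G' \<subseteq> k_subsets X b" "card G' = card G" "shift_stable X t G'"
    and FG': "cross_intersecting F' G'"
    using exists_shift_stable[OF assms(2) \<open>t \<in> X\<close> assms(4-6)] by blast
  have X': "finite (X - {t})" "card (X - {t}) = m - 1"
    using assms(2,3) \<open>t \<in> X\<close> by auto
  have "finite F'" "finite G'"
    using finite_subset[OF F'(1) finite_k_subsets] finite_subset[OF G'(1) finite_k_subsets] assms(2)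
    by auto
  then have card_F: "card F = card (deletion t F') + card (link t F')"
    and card_G: "card G = card (deletion t G') + card (link t G')"
    using F'(2) G'(2) card_deletion_add_card_link[of F' t] card_deletion_add_card_link[of G' t]
    by simp_all
  note families = deletion_k_subsets[OF F'(1)] link_k_subsets[OF assms(2) F'(1)]
    deletion_k_subsets[OF G'(1)] link_k_subsets[OF assms(2) G'(1)]
  have GF': "cross_intersecting G' F'" using FG' cross_intersecting_commute by blast
  have "f_bound m a = f_bound (m - 1) a + f_bound (m - 1) (a - 1)"
    using f_bound_pascal assms(7-9) by simp
  moreover have "g_threshold m b = g_threshold (m - 1) b + g_threshold (m - 1) (b - 1)"
    using g_threshold_pascal assms(7-9) by simp
  then consider "g_threshold (m - 1) b < card (deletion t G')"
    | "g_threshold (m - 1) (b - 1) < card (link t G')"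
    using assms(10) card_G by linarith
  then show ?thesis
  proof cases
    case 1
    have "card (deletion t F') + f_slack (m - 1) a b \<le> f_bound (m - 1) a"
      using IH[OF X' families(1,3) cross_intersecting_deletion[OF FG'] _ _ 1] assms(8,9) by simp
    moreover have "card (link t F') + f_slack (m - 1) (a - 1) b \<le> f_bound (m - 1) (a - 1)"
      using IH[OF X' families(2,3)
          cross_intersecting_link_deletion[OF assms(2) F'(3) FG' F'(1) G'(1)] _ _ 1] assms(3,7-9)
      by simp
    ultimately show ?thesis
      using card_F \<open>f_bound m a = _\<close> f_slack_pascal[where m = m and a = a and b = b] assms(7,9)
      by linarith
  next
    case 2
    have "card (deletion t F') + f_slack (m - 1) a (b - 1) \<le> f_bound (m - 1) a"
      using IH[OF X' families(1,4)
          cross_intersecting_link_deletion[OF assms(2) G'(3) GF' G'(1) F'(1), THEN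
            cross_intersecting_commute[THEN iffD1]] _ _ 2] assms(3,7-9)
      by simp
    moreover have "card (link t F') + f_slack (m - 1) (a - 1) (b - 1) \<le> f_bound (m - 1) (a - 1)"
      using IH[OF X' families(2,4)
          cross_intersecting_link_link[OF assms(2) F'(3) FG' F'(1) G'(1)] _ _ 2] assms(3,7-9)
      by simp
    ultimately show ?thesis
      using card_F \<open>f_bound m a = _\<close> f_slack_pred[of b m a] assms(8) by linarith
  qed
qed

theorem cross_intersecting_bound:
  fixes X :: "'a set"
  assumes "finite X" "card X = m" "F \<subseteq> k_subsets X a" "G \<subseteq> k_subsets X b"
    and "cross_intersecting F G" "a + b \<le> m" "2 \<le> b" "g_threshold m b < card G"
  shows "card F + f_slack m a b \<le> f_bound m a"
  using assms
proof (induction m arbitrary: X F G a b rule: less_induct)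
  case (less m)
  have "G \<noteq> {}" using less.prems(8) by auto
  consider "a = 0" | "a = 1" | "a \<ge> 2" "b = 2" | "a \<ge> 2" "b \<ge> 3" "a + b = m"
    | "a \<ge> 2" "b \<ge> 3" "a + b < m"
    using less.prems(6,7) by linarith
  then show ?case
  proof cases
    case 1
    then show ?thesis
      using cross_intersecting_k_subsets_zero[OF less.prems(1) _ less.prems(5) \<open>G \<noteq> {}\<close>]
        less.prems(3)
      by (simp add: f_slack_def f_bound_def)
  next
    case 2
    then show ?thesis
      using cross_intersecting_singletons_card_le[OF less.prems(1,2) _ less.prems(4,5,8)] less.prems(3)
      by (simp add: f_slack_def f_bound_def)
  next
    case 3
    then show ?thesis
      using cross_intersecting_pair_bound[OF less.prems(1-3) _ less.prems(5) \<open>G \<noteq> {}\<close>] less.prems(4,6)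
      by simp
  next
    case 4
    then show ?thesis
      using cross_intersecting_complementary_bound[of X a b F G] less.prems(1-5,8) by simp
  next
    case 5
    then show ?thesis
      using cross_intersecting_bound_step[OF less.IH less.prems(1-5)] less.prems(8) by simp
  qed
qed

section \<open>Two-point links\<close>

lemma link2_k_subsets:
  assumes "F \<subseteq> k_subsets Y k" "finite Y" "x \<noteq> y"
  shows "link2 F x y \<subseteq> k_subsets (Y - {x, y}) (k - 2)"
proof
  fix C assume "C \<in> link2 F x y"
  then obtain A where A: "A \<in> F" "{x, y} \<subseteq> A" "C = A - {x, y}"
    unfolding link2_def by blast
  then have "A \<subseteq> Y" "card A = k" using assms(1) unfolding k_subsets_def by auto
  moreover from this have "finite A" using assms(2) finite_subset by blast
  ultimately show "C \<in> k_subsets (Y - {x, y}) (k - 2)"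
    using A assms(3) unfolding k_subsets_def by (auto simp: card_Diff_subset)
qed

lemma avoid2_k_subsets: "G \<subseteq> k_subsets Y k \<Longrightarrow> avoid2 G x y \<subseteq> k_subsets (Y - {x, y}) k"
  unfolding avoid2_def k_subsets_def by auto

lemma cross_intersecting_link2_avoid2:
  assumes "cross_intersecting F G"
  shows "cross_intersecting (link2 F x y) (avoid2 G x y)"
  unfolding cross_intersecting_def
proof (intro ballI)
  fix C B assume "C \<in> link2 F x y" "B \<in> avoid2 G x y"
  then obtain A where "A \<in> F" "C = A - {x, y}" "B \<in> G" "B \<inter> {x, y} = {}"
    unfolding link2_def avoid2_def by blast
  moreover from this have "A \<inter> B \<noteq> {}" using assms unfolding cross_intersecting_def by blast
  ultimately show "C \<inter> B \<noteq> {}" by blast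
qed

theorem mainTheorem12:
  fixes n k x y :: nat and F G :: "nat set set"
  assumes "k \<ge> 4" and "n \<ge> 2 * k"
    and "F \<subseteq> {A. A \<subseteq> {1..n} \<and> card A = k}"
    and "G \<subseteq> {A. A \<subseteq> {1..n} \<and> card A = k}"
    and "cross_intersecting F G"
    and "x \<in> {1..n}" and "y \<in> {1..n}" and "x \<noteq> y"
    and "card (link2 F x y) \<ge> (n - 3 choose (k - 3)) + (n - 4 choose (k - 3)) + (n - 6 choose (k - 4))"
  shows "card (avoid2 G x y) \<le> (n - 5 choose (k - 3)) + (n - 6 choose (k - 3))"
proof -
  let ?X = "{1..n} - {x, y}"
  have X: "finite ?X" "card ?X = n - 2" using assms(6-8) by (simp_all add: card_Diff_subset)
  note families = link2_k_subsets[OF assms(3)[folded k_subsets_def] _ assms(8)]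
    avoid2_k_subsets[OF assms(4)[folded k_subsets_def]]
    cross_intersecting_link2_avoid2[OF assms(5)]
  have "card (avoid2 G x y) \<le> g_threshold (n - 2) k"
  proof (rule ccontr)
    assume "\<not> ?thesis"
    then have "card (link2 F x y) + f_slack (n - 2) (k - 2) k \<le> f_bound (n - 2) (k - 2)"
      using cross_intersecting_bound[OF X families] assms(1,2) by simp
    moreover have "f_slack (n - 2) (k - 2) k = (n - k - 4 choose (k - 4))"
      using assms(1) by (simp add: f_slack_def numeral_eq_Suc)
    moreover have "(n - k - 4 choose (k - 4)) > 0"
      using assms(1,2) by (intro zero_less_binomial) simp
    moreover have "f_bound (n - 2) (k - 2) =
        (n - 3 choose (k - 3)) + (n - 4 choose (k - 3)) + (n - 6 choose (k - 4))"
      using assms(1) by (simp add: f_bound_def numeral_eq_Suc)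
    ultimately show False using assms(9) by linarith
  qed
  also have "g_threshold (n - 2) k = (n - 5 choose (k - 3)) + (n - 6 choose (k - 3))"
    using assms(1) by (simp add: g_threshold_def numeral_eq_Suc)
  finally show ?thesis .
qed

end
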